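(* Let $\widehat n\ge1$ be an integer and define $\theta_0=1/\widehat n$, $\theta_{k+1}=\frac{\sqrt{\theta_k^4+4\theta_k^2}-\theta_k^2}{2}$ for $k\ge0$, so that $\frac{1-\theta_k}{\theta_k^2}=\frac{1}{\theta_{k-1}^2}$ for all $k\ge0$, with the convention $\frac{1}{\theta_{-1}^2}=\widehat n^2-\widehat n$. Then: (1) $0\le\theta_k\le\theta_{k-1}\le\cdots\le\theta_1\le\theta_0=\frac1{\widehat n}$ for all $k\ge1$; (2) $\sum_{k=K_0}^K\frac1{\theta_k}=\frac1{\theta_K^2}-\frac1{\theta_{K_0-1}^2}$ for all integers $0\le K_0\le K$; (3) $\frac k2+\frac k{2\widehat n}+\widehat n\ge\frac1{\theta_k}\ge\frac k2+\widehat n$ for all $k\ge0$; (4) if $\upsilon>1$ and $K_0$ is a nonnegative integer with $K_0\le\left\lfloor\frac{K}{\upsilon(1+1/\widehat n)}+1\right\rfloor$, then $\frac1{\theta_K^2}-\frac1{\theta_{K_0-1}^2}\ge\left(\frac{K^2}4+\widehat nK\right)\left(1-\frac1\upsilon\right)$. *)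

theory Defs
  imports Complex_Main
begin

fun theta :: "nat \<Rightarrow> nat \<Rightarrow> real" where
  "theta nh 0 = 1 / real nh"
| "theta nh (Suc k) = (sqrt (theta nh k ^ 4 + 4 * theta nh k ^ 2) - theta nh k ^ 2) / 2"

definition inv_sq_prev :: "nat \<Rightarrow> nat \<Rightarrow> real" where
  "inv_sq_prev nh k = (if k = 0 then real nh ^ 2 - real nh else 1 / theta nh (k - 1) ^ 2)"

end

theory Submission
  imports Defs
begin

text \<open>With \<open>a k = 1 / theta k\<close> the recursion becomes \<open>a (k+1)^2 - a (k+1) = a k^2\<close>.
  Hence \<open>a k = 1/theta k^2 - 1/theta (k-1)^2\<close>, so the sum of the \<open>a k\<close> telescopes; and
  completing the square, \<open>(a (k+1) - 1/2)^2 = a k^2 + 1/4\<close>, gives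
  \<open>1/2 \<le> a (k+1) - a k \<le> 1/2 + 1/(4 a k)\<close>. Summing these increments from \<open>a 0 = n\<close>
  yields the linear bounds on \<open>a k\<close>, and the final estimate compares the lower bound
  for \<open>a K\<close> with the upper bound for \<open>a (K0 - 1)\<close>.\<close>

lemma theta_step:
  fixes t :: real
  assumes "0 < t"
  defines "s \<equiv> (sqrt (t ^ 4 + 4 * t ^ 2) - t ^ 2) / 2"
  shows "0 < s" and "(1 / s) ^ 2 - 1 / s = (1 / t) ^ 2"
proof -
  have "sqrt (t ^ 4) = t ^ 2"
    using real_sqrt_abs[of "t ^ 2"] by (simp flip: power_mult)
  moreover have "sqrt (t ^ 4) < sqrt (t ^ 4 + 4 * t ^ 2)"
    using assms(1) by simp
  ultimately show s_pos: "0 < s"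
    unfolding s_def by simp
  have "2 * s + t ^ 2 = sqrt (t ^ 4 + 4 * t ^ 2)"
    unfolding s_def by (simp add: field_simps)
  then have "(2 * s + t ^ 2) ^ 2 = t ^ 4 + 4 * t ^ 2"
    by simp
  then have "s ^ 2 + s * t ^ 2 = t ^ 2"
    by (simp add: algebra_simps power2_eq_square power4_eq_xxxx)
  with s_pos assms(1) show "(1 / s) ^ 2 - 1 / s = (1 / t) ^ 2"
    by (simp add: field_simps power2_eq_square)
qed

lemma theta_pos:
  assumes "nh \<ge> 1"
  shows "0 < theta nh k"
  by (induction k) (use assms theta_step(1) in auto)

lemma inverse_theta_Suc:
  assumes "nh \<ge> 1"
  shows "(1 / theta nh (Suc k)) ^ 2 - 1 / theta nh (Suc k) = (1 / theta nh k) ^ 2"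
  unfolding theta.simps(2) by (rule theta_step(2)[OF theta_pos[OF assms]])

declare theta.simps(2) [simp del]

lemma square_sub_self_eq_imp_ge:
  fixes a b :: real
  assumes "0 < b" and "b ^ 2 - b = a ^ 2"
  shows "a + 1 / 2 \<le> b"
proof -
  have "0 \<le> b * (b - 1)"
    using assms(2) by (simp add: power2_eq_square algebra_simps)
  with assms(1) have "1 \<le> b"
    by (simp add: zero_le_mult_iff)
  have "(b - 1 / 2) ^ 2 = a ^ 2 + 1 / 4"
    using assms(2) by (simp add: power2_eq_square algebra_simps)
  then have "\<bar>a\<bar> \<le> \<bar>b - 1 / 2\<bar>"
    by (simp add: abs_le_square_iff)
  with \<open>1 \<le> b\<close> show ?thesis
    by linarith
qed

lemma square_sub_self_eq_imp_le:
  fixes a b :: real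
  assumes "0 < a" and "b ^ 2 - b = a ^ 2"
  shows "b \<le> a + 1 / 2 + 1 / (4 * a)"
proof -
  have "(b - 1 / 2) ^ 2 = a ^ 2 + 1 / 4"
    using assms(2) by (simp add: power2_eq_square algebra_simps)
  also have "\<dots> \<le> (a + 1 / (4 * a)) ^ 2"
    using assms(1) by (simp add: power2_eq_square field_simps)
  finally have "\<bar>b - 1 / 2\<bar> \<le> \<bar>a + 1 / (4 * a)\<bar>"
    by (simp add: abs_le_square_iff)
  moreover have "0 < a + 1 / (4 * a)"
    using assms(1) by (simp add: add_pos_pos)
  ultimately show ?thesis
    by linarith
qed

lemma inverse_theta_Suc_ge:
  assumes "nh \<ge> 1"
  shows "1 / theta nh k + 1 / 2 \<le> 1 / theta nh (Suc k)"
  using square_sub_self_eq_imp_ge inverse_theta_Suc[OF assms] theta_pos[OF assms] by simp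

lemma theta_Suc_le:
  assumes "nh \<ge> 1"
  shows "theta nh (Suc k) \<le> theta nh k"
proof -
  have "inverse (theta nh k) \<le> inverse (theta nh (Suc k))"
    using inverse_theta_Suc_ge[OF assms, of k] by (simp add: inverse_eq_divide)
  then show ?thesis
    using theta_pos[OF assms] by simp
qed

lemma inverse_theta_bounds:
  assumes "nh \<ge> 1"
  shows "real k / 2 + real nh \<le> 1 / theta nh k
    \<and> 1 / theta nh k \<le> real k / 2 + real k / (2 * real nh) + real nh"
proof (induction k)
  case 0
  then show ?case by simp
next
  case (Suc k)
  let ?a = "1 / theta nh k" and ?b = "1 / theta nh (Suc k)"
  have "?b \<le> ?a + 1 / 2 + 1 / (4 * ?a)"
    using theta_pos[OF assms, of k]
    by (intro square_sub_self_eq_imp_le inverse_theta_Suc[OF assms]) simp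
  moreover have "1 / (4 * ?a) \<le> 1 / (2 * real nh)"
  proof (rule divide_left_mono)
    show "2 * real nh \<le> 4 * ?a" and "0 < 4 * ?a * (2 * real nh)"
      using Suc.IH assms theta_pos[OF assms, of k] by auto
  qed simp
  ultimately show ?case
    using Suc.IH inverse_theta_Suc_ge[OF assms, of k] by (simp add: add_divide_distrib)
qed

lemma inv_sq_prev_Suc: "inv_sq_prev nh (Suc k) = 1 / theta nh k ^ 2"
  by (simp add: inv_sq_prev_def)

lemma inverse_theta_eq_diff:
  assumes "nh \<ge> 1"
  shows "1 / theta nh k = inv_sq_prev nh (Suc k) - inv_sq_prev nh k"
proof (cases k)
  case 0
  then show ?thesis by (simp add: inv_sq_prev_def power_one_over)
next
  case (Suc j)
  then show ?thesis
    using inverse_theta_Suc[OF assms, of j] by (simp add: inv_sq_prev_def power_one_over)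
qed

lemma one_minus_theta_div_square:
  assumes "nh \<ge> 1"
  shows "(1 - theta nh k) / theta nh k ^ 2 = inv_sq_prev nh k"
proof -
  have "(1 - theta nh k) / theta nh k ^ 2 = 1 / theta nh k ^ 2 - 1 / theta nh k"
    using theta_pos[OF assms, of k] by (simp add: field_simps power2_eq_square)
  then show ?thesis
    using inverse_theta_eq_diff[OF assms, of k] by (simp add: inv_sq_prev_Suc)
qed

lemma sum_inverse_theta:
  assumes "nh \<ge> 1" and "K0 \<le> K"
  shows "(\<Sum>k=K0..K. 1 / theta nh k) = 1 / theta nh K ^ 2 - inv_sq_prev nh K0"
  using sum_Suc_diff[of K0 K "inv_sq_prev nh"] assms
  by (simp add: inverse_theta_eq_diff inv_sq_prev_Suc)

lemma inv_sq_prev_le: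
  assumes "nh \<ge> 1" and "\<upsilon> > 0"
    and "int K0 \<le> \<lfloor>real K / (\<upsilon> * (1 + 1 / real nh)) + 1\<rfloor>"
  shows "inv_sq_prev nh K0 \<le> (real K / (2 * \<upsilon>) + real nh) ^ 2"
proof (cases K0)
  case 0
  have "real nh ^ 2 \<le> (real K / (2 * \<upsilon>) + real nh) ^ 2"
    using assms(2) by (simp add: power_mono)
  with 0 show ?thesis by (simp add: inv_sq_prev_def)
next
  case (Suc j)
  define c where "c = 1 + 1 / real nh"
  have "c > 0"
    unfolding c_def by (simp add: add_pos_nonneg)
  have "real (Suc j) \<le> real K / (\<upsilon> * c) + 1"
    using assms(3) Suc unfolding c_def by linarith
  then have "real j * c \<le> real K / \<upsilon>"
    using \<open>c > 0\<close> assms(2) by (simp add: field_simps)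
  have "1 / theta nh j \<le> real j / 2 + real j / (2 * real nh) + real nh"
    using inverse_theta_bounds[OF assms(1)] by blast
  also have "\<dots> = real j * c / 2 + real nh"
    unfolding c_def by (simp add: field_simps)
  also have "\<dots> \<le> real K / (2 * \<upsilon>) + real nh"
    using \<open>real j * c \<le> real K / \<upsilon>\<close> by simp
  finally have "(1 / theta nh j) ^ 2 \<le> (real K / (2 * \<upsilon>) + real nh) ^ 2"
    using theta_pos[OF assms(1), of j] by (simp add: power_mono)
  with Suc show ?thesis
    by (simp add: inv_sq_prev_Suc power_one_over)
qed

lemma difference_of_squares_ge:
  fixes K n \<upsilon> :: real
  assumes "K \<ge> 0" and "n \<ge> 0" and "\<upsilon> > 1"
  shows "(K ^ 2 / 4 + n * K) * (1 - 1 / \<upsilon>) \<le> (K / 2 + n) ^ 2 - (K / (2 * \<upsilon>) + n) ^ 2"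
proof -
  have "(K / 2 + n) ^ 2 - (K / (2 * \<upsilon>) + n) ^ 2
      = K ^ 2 / 4 * (1 - 1 / \<upsilon> ^ 2) + n * K * (1 - 1 / \<upsilon>)"
    using assms(3) by (simp add: field_simps power2_eq_square)
  moreover have "K ^ 2 / 4 * (1 - 1 / \<upsilon>) \<le> K ^ 2 / 4 * (1 - 1 / \<upsilon> ^ 2)"
    using assms(3) by (intro mult_left_mono) (simp_all add: field_simps power2_eq_square)
  ultimately show ?thesis
    by (simp add: algebra_simps)
qed

theorem lemma2:
  fixes nh :: nat
  assumes "nh \<ge> 1"
  shows "(\<forall>k. (1 - theta nh k) / theta nh k ^ 2 = inv_sq_prev nh k)
    \<and> theta nh 0 = 1 / real nh
    \<and> (\<forall>k\<ge>1. 0 \<le> theta nh k \<and> theta nh k \<le> theta nh (k - 1))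
    \<and> (\<forall>K0 K. K0 \<le> K \<longrightarrow>
          (\<Sum>k=K0..K. 1 / theta nh k) = 1 / theta nh K ^ 2 - inv_sq_prev nh K0)
    \<and> (\<forall>k. real k / 2 + real k / (2 * real nh) + real nh \<ge> 1 / theta nh k
          \<and> 1 / theta nh k \<ge> real k / 2 + real nh)
    \<and> (\<forall>(\<upsilon>::real) K0 K. \<upsilon> > 1 \<longrightarrow>
          int K0 \<le> \<lfloor>real K / (\<upsilon> * (1 + 1 / real nh)) + 1\<rfloor> \<longrightarrow>
          1 / theta nh K ^ 2 - inv_sq_prev nh K0
            \<ge> (real K ^ 2 / 4 + real nh * real K) * (1 - 1 / \<upsilon>))"
proof (intro conjI allI impI)
  fix k :: nat
  assume "k \<ge> 1"
  then show "0 \<le> theta nh k" and "theta nh k \<le> theta nh (k - 1)"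
    using theta_pos[OF assms, of k] theta_Suc_le[OF assms, of "k - 1"] by simp_all
next
  fix \<upsilon> :: real and K0 K :: nat
  assume "\<upsilon> > 1" and "int K0 \<le> \<lfloor>real K / (\<upsilon> * (1 + 1 / real nh)) + 1\<rfloor>"
  then have "inv_sq_prev nh K0 \<le> (real K / (2 * \<upsilon>) + real nh) ^ 2"
    using inv_sq_prev_le[OF assms] by simp
  moreover have "(real K / 2 + real nh) ^ 2 \<le> 1 / theta nh K ^ 2"
    using inverse_theta_bounds[OF assms, of K]
    by (simp add: power_mono flip: power_one_over)
  ultimately show "1 / theta nh K ^ 2 - inv_sq_prev nh K0
      \<ge> (real K ^ 2 / 4 + real nh * real K) * (1 - 1 / \<upsilon>)"
    using difference_of_squares_ge[of "real K" "real nh" \<upsilon>] \<open>\<upsilon> > 1\<close> by simp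
qed (simp_all add: one_minus_theta_div_square[OF assms] sum_inverse_theta[OF assms] inverse_theta_bounds[OF assms])

end
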